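(* Consider the problem $\min_{x\in\mathbb{R}^n}\max_{y\in\Delta}F(x)^Ty$ and suppose Assumption A and the strict complementarity assumption hold. Let $\{(x^t,y^t,z^t)\}$ be generated by Smoothed-GDA with parameters $c>0$, $\alpha>0$, $p>L$, $0<\beta\le1$, and suppose there is $R>0$ with $\|z^t\|\le R$. Then there exist $\delta>0$ and $\sigma_5>0$ such that whenever $$\max\{\|x^t-x^{t+1}\|,\ \|y^t-y^t_+(z^t)\|,\ \|x^{t+1}-z^t\|\}\le\delta,$$ we have $\|x(y^t_+(z^t),z^t)-x^*(z^t)\|\le\sigma_5\|y^t-y^t_+(z^t)\|$.
   Context: $F(x)=(f_1(x),\dots,f_m(x))^T$ smooth $\mathbb{R}^n\to\mathbb{R}^m$, $\Delta$ the probability simplex in $\mathbb{R}^m$, $f(x,y)=F(x)^Ty$. Assumption A: $\nabla_xf,\nabla_yf$ are $L$-Lipschitz ($L>0$) and $\max_if_i(x)$ is bounded below. KKT system for $(x^*,y^* )$ with multipliers $\mu,\nu$: $\sum_iy_i^*\nabla f_i(x^* )=0$, $\sum_iy_i^*=1$, $y_i^*\ge0$, $\mu-\nu_i=f_i(x^* )$, $\nu_i\ge0$, $\nu_iy_i^*=0$. Strict complementarity: every solution of the KKT system has $\nu_i>0$ whenever $y_i^*=0$. $K(x,z;y)=f(x,y)+\frac p2\|x-z\|^2$; $x(y,z)=\arg\min_{x}K(x,z;y)$; $x^*(z)=\arg\min_x\max_{y\in\Delta}K(x,z;y)$. Smoothed-GDA: $x^{t+1}=x^t-c\nabla_xK(x^t,z^t;y^t)$,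 $y^{t+1}=P_\Delta(y^t+\alpha\nabla_yK(x^{t+1},z^t;y^t))$, $z^{t+1}=z^t+\beta(x^{t+1}-z^t)$, with $P_\Delta$ Euclidean projection; $y^t_+(z^t)=P_\Delta(y^t+\alpha\nabla_yK(x(y^t,z^t),z^t;y^t))$. The constants $\delta,\sigma_5$ do not depend on $t$. *)

theory Defs
  imports "HOL-Analysis.Analysis"
begin

text \<open>Vectors: x in R^n is real^'n, y in R^m is real^'m. F :: real^'n => real^'m,
  f_i(x) = F x $ i. The gradient of f_i is given explicitly as G i.\<close>

definition prob_simplex :: "(real^('m::finite)) set" where
  "prob_simplex = {y. (\<forall>i. 0 \<le> y $ i) \<and> (\<Sum>i\<in>UNIV. y $ i) = 1}"

definition projS :: "real^'m \<Rightarrow> real^'m" where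
  "projS v = closest_point prob_simplex v"

definition fxy :: "(real^'n \<Rightarrow> real^'m) \<Rightarrow> real^'n \<Rightarrow> real^'m \<Rightarrow> real" where
  "fxy F x y = F x \<bullet> y"

definition Kfun :: "(real^'n \<Rightarrow> real^'m) \<Rightarrow> real \<Rightarrow> real^'n \<Rightarrow> real^'n \<Rightarrow> real^'m \<Rightarrow> real" where
  "Kfun F p x z y = fxy F x y + p / 2 * (norm (x - z))\<^sup>2"

definition gradx_f :: "('m \<Rightarrow> real^'n \<Rightarrow> real^'n) \<Rightarrow> real^'n \<Rightarrow> real^'m \<Rightarrow> real^'n" where
  "gradx_f G x y = (\<Sum>i\<in>UNIV. (y $ i) *\<^sub>R G i x)"

definition grady_f :: "(real^'n \<Rightarrow> real^'m) \<Rightarrow> real^'n \<Rightarrow> real^'m \<Rightarrow> real^'m" where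
  "grady_f F x y = F x"

definition gradx_K :: "('m \<Rightarrow> real^'n \<Rightarrow> real^'n) \<Rightarrow> real \<Rightarrow> real^'n \<Rightarrow> real^'n \<Rightarrow> real^'m \<Rightarrow> real^'n" where
  "gradx_K G p x z y = gradx_f G x y + p *\<^sub>R (x - z)"

definition grady_K :: "(real^'n \<Rightarrow> real^'m) \<Rightarrow> real \<Rightarrow> real^'n \<Rightarrow> real^'n \<Rightarrow> real^'m \<Rightarrow> real^'m" where
  "grady_K F p x z y = grady_f F x y"

definition xmin :: "(real^'n \<Rightarrow> real^'m) \<Rightarrow> real \<Rightarrow> real^'m \<Rightarrow> real^'n \<Rightarrow> real^'n" where
  "xmin F p y z = (THE x. \<forall>x'. Kfun F p x z y \<le> Kfun F p x' z y)"

definition xstar :: "(real^'n \<Rightarrow> real^'m) \<Rightarrow> real \<Rightarrow> real^'n \<Rightarrow> real^'n" where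
  "xstar F p z = (THE x. \<forall>x'. (SUP y\<in>prob_simplex. Kfun F p x z y) \<le> (SUP y\<in>prob_simplex. Kfun F p x' z y))"

definition KKT :: "(real^'n \<Rightarrow> real^'m) \<Rightarrow> ('m \<Rightarrow> real^'n \<Rightarrow> real^'n) \<Rightarrow> real^'n \<Rightarrow> real^'m \<Rightarrow> real \<Rightarrow> real^'m \<Rightarrow> bool" where
  "KKT F G xs ys mu nu \<longleftrightarrow>
     (\<Sum>i\<in>UNIV. (ys $ i) *\<^sub>R G i xs) = 0 \<and> (\<Sum>i\<in>UNIV. ys $ i) = 1 \<and> (\<forall>i. 0 \<le> ys $ i) \<and>
     (\<forall>i. mu - nu $ i = F xs $ i) \<and> (\<forall>i. 0 \<le> nu $ i) \<and> (\<forall>i. nu $ i * ys $ i = 0)"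

definition strict_complementarity :: "(real^'n \<Rightarrow> real^('m::finite)) \<Rightarrow> ('m \<Rightarrow> real^'n \<Rightarrow> real^'n) \<Rightarrow> bool" where
  "strict_complementarity F G \<longleftrightarrow>
     (\<forall>xs ys mu nu. KKT F G xs ys mu nu \<longrightarrow> (\<forall>i. ys $ i = 0 \<longrightarrow> nu $ i > 0))"

definition assumptionA :: "(real^'n \<Rightarrow> real^'m) \<Rightarrow> ('m \<Rightarrow> real^'n \<Rightarrow> real^'n) \<Rightarrow> real \<Rightarrow> bool" where
  "assumptionA F G L \<longleftrightarrow> L > 0 \<and>
     (\<forall>x y x' y'. y \<in> prob_simplex \<longrightarrow> y' \<in> prob_simplex \<longrightarrow>
        norm (gradx_f G x y - gradx_f G x' y') \<le> L * norm ((x, y) - (x', y'))) \<and>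
     (\<forall>x y x' y'. y \<in> prob_simplex \<longrightarrow> y' \<in> prob_simplex \<longrightarrow>
        norm (grady_f F x y - grady_f F x' y') \<le> L * norm ((x, y) - (x', y'))) \<and>
     (\<exists>B. \<forall>x. B \<le> Max (range (\<lambda>i. F x $ i)))"

end

theory Submission
  imports Defs
begin

text \<open>
  For fixed \<open>z\<close> the function \<open>K(\<cdot>, z; y)\<close> is \<open>(p - L)\<close>-strongly convex, so its minimiser
  \<open>x(y, z)\<close> is Lipschitz in \<open>y\<close>, and by Brouwer's theorem the projected dual ascent map has a fixed
  point \<open>y'\<close>, a saddle point with \<open>x(y', z) = x*(z)\<close>. Testing the projection that defines \<open>y\<^sub>+\<close>
  against \<open>y'\<close> gives, for \<open>e = |x(y, z) - x*(z)|\<close> and \<open>r = |y - y\<^sub>+|\<close>,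
  \<open>\<alpha>(p - L) e\<^sup>2 + \<alpha>\<eta> S \<le> r |y\<^sub>+ - y'| + \<alpha>L e r\<close>, where \<open>S\<close> is the mass of \<open>y\<^sub>+\<close> on the coordinates
  that are not \<open>\<eta>\<close>-active for \<open>F(x*(z))\<close>.
  A compactness argument turns strict complementarity into a uniform linear independence of the
  active gradients near the bounded set of points \<open>x*(z)\<close>; it bounds \<open>|y\<^sub>+ - y'|\<close> by \<open>O(r + e)\<close>
  plus a multiple of \<open>S\<close>, which is absorbed once \<open>r\<close> is small. What remains is
  \<open>e\<^sup>2 = O(r\<^sup>2 + r e)\<close>, hence \<open>e = O(r)\<close>. Smallness of the three quantities in the hypothesis keeps
  \<open>x(y, z)\<close> close to \<open>z\<close>, which localises \<open>x*(z)\<close> where the uniform constants apply.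
\<close>

section \<open>The probability simplex\<close>

lemma prob_simplex_nonneg: "y \<in> prob_simplex \<Longrightarrow> 0 \<le> y $ i"
  by (simp add: prob_simplex_def)

lemma prob_simplex_sum: "y \<in> prob_simplex \<Longrightarrow> (\<Sum>i\<in>UNIV. y $ i) = 1"
  by (simp add: prob_simplex_def)

lemma norm_le_1_of_prob_simplex: "y \<in> prob_simplex \<Longrightarrow> norm y \<le> 1"
proof -
  assume y: "y \<in> prob_simplex"
  have "norm y \<le> (\<Sum>i\<in>UNIV. \<bar>y $ i\<bar>)" by (rule norm_le_l1_cart)
  also have "\<dots> = 1" using prob_simplex_sum[OF y] prob_simplex_nonneg[OF y] by simp
  finally show ?thesis .
qed

lemma axis_in_prob_simplex: "axis i 1 \<in> prob_simplex"
  unfolding prob_simplex_def by (auto simp: axis_def)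

lemma prob_simplex_nonempty: "prob_simplex \<noteq> {}"
  using axis_in_prob_simplex by blast

lemma closed_prob_simplex: "closed prob_simplex"
proof -
  have "prob_simplex = (\<Inter>i. {y::real^'m. 0 \<le> y $ i}) \<inter> {y. (\<Sum>i\<in>UNIV. y $ i) = 1}"
    unfolding prob_simplex_def by auto
  also have "closed \<dots>"
    by (intro closed_Int closed_INT ballI closed_Collect_le closed_Collect_eq continuous_intros)
  finally show ?thesis .
qed

lemma convex_prob_simplex: "convex prob_simplex"
  unfolding convex_def prob_simplex_def
  by (auto simp: sum.distrib sum_distrib_left[symmetric])

lemma compact_prob_simplex: "compact prob_simplex"
  using closed_prob_simplex norm_le_1_of_prob_simplex
  by (auto simp: compact_eq_bounded_closed bounded_iff)

lemma projS_in_prob_simplex: "projS v \<in> prob_simplex"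
  unfolding projS_def by (rule closest_point_in_set[OF closed_prob_simplex prob_simplex_nonempty])

lemma projS_inner_le_0: "w \<in> prob_simplex \<Longrightarrow> (v - projS v) \<bullet> (w - projS v) \<le> 0"
  unfolding projS_def by (rule closest_point_dot[OF convex_prob_simplex closed_prob_simplex])

lemma continuous_on_projS: "continuous_on S projS"
  unfolding projS_def
  by (rule continuous_on_closest_point[OF convex_prob_simplex closed_prob_simplex prob_simplex_nonempty])

definition simplex_maximizer :: "real^'m \<Rightarrow> real^'m::finite \<Rightarrow> bool" where
  "simplex_maximizer v y \<longleftrightarrow> y \<in> prob_simplex \<and> (\<forall>w\<in>prob_simplex. v \<bullet> w \<le> v \<bullet> y)"

definition almost_argmax :: "real \<Rightarrow> real^'m \<Rightarrow> 'm::finite \<Rightarrow> bool" where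
  "almost_argmax \<eta> v i \<longleftrightarrow> (\<forall>j. v $ j - \<eta> \<le> v $ i)"

lemma almost_argmax_mono: "almost_argmax \<eta> v i \<Longrightarrow> \<eta> \<le> \<eta>' \<Longrightarrow> almost_argmax \<eta>' v i"
  unfolding almost_argmax_def by (meson diff_left_mono order_trans)

lemma simplex_maximizer_projS_fixpoint:
  assumes "projS (y + v) = y" shows "simplex_maximizer v y"
  unfolding simplex_maximizer_def
  using projS_in_prob_simplex[of "y + v"] projS_inner_le_0[of _ "y + v"] assms
  by (auto simp: inner_diff_right)

lemma closed_simplex_maximizer: "closed {(v, y). simplex_maximizer v y}"
proof -
  have "{(v, y). simplex_maximizer v y} =
      (UNIV \<times> prob_simplex) \<inter> (\<Inter>w\<in>prob_simplex. {q. fst q \<bullet> w \<le> fst q \<bullet> snd q})"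
    by (auto simp: simplex_maximizer_def)
  also have "closed \<dots>"
    by (intro closed_Int closed_Times closed_INT ballI closed_Collect_le continuous_intros
        closed_prob_simplex closed_UNIV)
  finally show ?thesis .
qed

lemma simplex_maximizer_support:
  assumes max: "simplex_maximizer v y" and pos: "0 < y $ i"
  shows "almost_argmax 0 v i"
  unfolding almost_argmax_def
proof (rule allI, rule ccontr)
  fix j assume "\<not> v $ j - 0 \<le> v $ i"
  then have gain: "0 < y $ i * (v $ j - v $ i)" using pos by simp
  have y: "y \<in> prob_simplex" using max by (simp add: simplex_maximizer_def)
  define w where "w = y + (y $ i) *\<^sub>R (axis j 1 - axis i 1)"
  have wk: "w $ k = y $ k + (if k = j then y $ i else 0) - (if k = i then y $ i else 0)" for k
    by (simp add: w_def axis_def)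
  have "j \<noteq> i" using gain by auto
  then have "w \<in> prob_simplex"
    using prob_simplex_nonneg[OF y] prob_simplex_sum[OF y]
    by (auto simp: prob_simplex_def wk sum.distrib sum_subtractf)
  then have "v \<bullet> w \<le> v \<bullet> y" using max by (simp add: simplex_maximizer_def)
  moreover have "v \<bullet> w = v \<bullet> y + y $ i * (v $ j - v $ i)"
    by (simp add: w_def inner_add_right inner_diff_right inner_axis algebra_simps)
  ultimately show False using gain by simp
qed

lemma simplex_maximizer_gap:
  assumes max: "simplex_maximizer v y" and w: "w \<in> prob_simplex"
  shows "v \<bullet> w + \<eta> * (\<Sum>i | \<not> almost_argmax \<eta> v i. w $ i) \<le> v \<bullet> y"
proof -
  define m where "m = Max (range (\<lambda>j. v $ j))"
  have le_m: "v $ j \<le> m" for j unfolding m_def by (rule Max_ge) auto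
  have y: "y \<in> prob_simplex" using max by (simp add: simplex_maximizer_def)
  have supp: "y $ i * v $ i = y $ i * m" for i
  proof (cases "0 < y $ i")
    case True
    then have "m = v $ i"
      using simplex_maximizer_support[OF max] unfolding m_def almost_argmax_def
      by (intro Max_eqI) auto
    then show ?thesis by simp
  qed (use prob_simplex_nonneg[OF y, of i] in simp)
  have "v \<bullet> y = (\<Sum>i\<in>UNIV. y $ i * v $ i)" by (simp add: inner_vec_def mult.commute)
  also have "\<dots> = (\<Sum>i\<in>UNIV. y $ i * m)" by (rule sum.cong[OF refl supp])
  also have "\<dots> = m" using prob_simplex_sum[OF y] by (simp add: sum_distrib_right[symmetric])
  finally have vy: "v \<bullet> y = m" .
  have bound: "w $ i * v $ i + \<eta> * (if almost_argmax \<eta> v i then 0 else w $ i) \<le> w $ i * m" for i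
  proof (cases "almost_argmax \<eta> v i")
    case False
    then obtain j where "v $ i + \<eta> < v $ j" unfolding almost_argmax_def by (auto simp: algebra_simps not_le)
    then have "w $ i * (v $ i + \<eta>) \<le> w $ i * m"
      using le_m[of j] prob_simplex_nonneg[OF w, of i] by (intro mult_left_mono) auto
    then show ?thesis using False by (simp add: algebra_simps)
  qed (use le_m prob_simplex_nonneg[OF w] in \<open>simp add: mult_left_mono\<close>)
  have "(\<Sum>i | \<not> almost_argmax \<eta> v i. w $ i) = (\<Sum>i\<in>UNIV. if almost_argmax \<eta> v i then 0 else w $ i)"
    by (rule sum.mono_neutral_cong_left) auto
  then have "v \<bullet> w + \<eta> * (\<Sum>i | \<not> almost_argmax \<eta> v i. w $ i)
      = (\<Sum>i\<in>UNIV. w $ i * v $ i + \<eta> * (if almost_argmax \<eta> v i then 0 else w $ i))"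
    by (simp add: inner_vec_def sum.distrib sum_distrib_left mult.commute)
  also have "\<dots> \<le> (\<Sum>i\<in>UNIV. w $ i * m)" by (intro sum_mono bound)
  also have "\<dots> = m" using prob_simplex_sum[OF w] by (simp add: sum_distrib_right[symmetric])
  finally show ?thesis using vy by simp
qed

lemma almost_argmax_limit:
  fixes U :: "nat \<Rightarrow> real^'m"
  assumes V: "V \<longlonglongrightarrow> v" and U: "U \<longlonglongrightarrow> u" and e: "e \<longlonglongrightarrow> 0"
    and near: "\<And>k i. U k $ i \<noteq> 0 \<Longrightarrow> almost_argmax (e k) (V k) i" and ui: "u $ i \<noteq> 0"
  shows "almost_argmax 0 v i"
  unfolding almost_argmax_def
proof
  fix j
  have "eventually (\<lambda>k. U k $ i \<noteq> 0) sequentially"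
    using tendsto_vec_nth[OF U, of i] ui by (rule tendsto_imp_eventually_ne)
  then have "eventually (\<lambda>k. V k $ j - e k \<le> V k $ i) sequentially"
    by (rule eventually_mono) (use near in \<open>simp add: almost_argmax_def\<close>)
  then show "v $ j - 0 \<le> v $ i"
    by (rule tendsto_le[OF trivial_limit_sequentially tendsto_vec_nth[OF V]
          tendsto_diff[OF tendsto_vec_nth[OF V] e]])
qed

lemma prob_simplex_ray_exit:
  assumes y: "y \<in> prob_simplex" and sum_v: "(\<Sum>i\<in>UNIV. v $ i) = 0" and "v \<noteq> 0"
  obtains s i where "0 \<le> s" "v $ i < 0" "y + s *\<^sub>R v \<in> prob_simplex" "(y + s *\<^sub>R v) $ i = 0"
proof -
  define N where "N = {i. v $ i < 0}"
  have "N \<noteq> {}"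
  proof
    assume "N = {}"
    then have "\<forall>i\<in>UNIV. v $ i = 0"
      using sum_v sum_nonneg_eq_0_iff[of UNIV "\<lambda>i. v $ i"] by (auto simp: N_def not_less)
    with \<open>v \<noteq> 0\<close> show False by (simp add: vec_eq_iff)
  qed
  define q where "q i = y $ i / (- v $ i)" for i
  have "Min (q ` N) \<in> q ` N" by (rule Min_in) (use \<open>N \<noteq> {}\<close> in auto)
  then obtain i where i: "i \<in> N" "q i = Min (q ` N)" by auto
  have vi: "v $ i < 0" using i by (simp add: N_def)
  have min_q: "q i * (- v $ k) \<le> y $ k" if "v $ k < 0" for k
  proof -
    have "q i \<le> q k" unfolding i(2) by (rule Min_le) (use that in \<open>auto simp: N_def\<close>)
    moreover have "0 < - v $ k" using that by simp
    ultimately show ?thesis by (simp only: q_def[of k] pos_le_divide_eq)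
  qed
  have "0 \<le> q i" using vi prob_simplex_nonneg[OF y, of i] by (simp add: q_def divide_nonneg_neg)
  moreover have "y + q i *\<^sub>R v \<in> prob_simplex"
  proof -
    have "0 \<le> y $ k + q i * v $ k" for k
      using min_q[of k] \<open>0 \<le> q i\<close> prob_simplex_nonneg[OF y, of k]
      by (cases "v $ k < 0") (auto simp: not_less)
    then show ?thesis using prob_simplex_sum[OF y] sum_v
      by (simp add: prob_simplex_def sum.distrib sum_distrib_left[symmetric])
  qed
  moreover have "(y + q i *\<^sub>R v) $ i = 0" using vi by (simp add: q_def)
  ultimately show ?thesis using that vi by blast
qed

lemma linear_gradx_f: "linear (gradx_f G x)"
  by (rule linearI) (simp_all add: gradx_f_def scaleR_add_left sum.distrib scaleR_sum_right)

lemma norm_gradx_f_le_sum: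
  assumes "\<And>i. 0 \<le> v $ i" and "\<And>i. norm (G i x) \<le> C"
  shows "norm (gradx_f G x v) \<le> C * (\<Sum>i\<in>UNIV. v $ i)"
proof -
  have "norm (gradx_f G x v) \<le> (\<Sum>i\<in>UNIV. norm (v $ i *\<^sub>R G i x))"
    unfolding gradx_f_def by (rule norm_sum)
  also have "\<dots> \<le> (\<Sum>i\<in>UNIV. v $ i * C)" using assms by (intro sum_mono) (simp add: mult_left_mono)
  also have "\<dots> = C * (\<Sum>i\<in>UNIV. v $ i)" by (simp add: sum_distrib_left mult.commute)
  finally show ?thesis .
qed

text \<open>Moving \<open>y\<close> along \<open>v\<close> until a coordinate with \<open>v $ i0 < 0\<close> vanishes gives a second KKT
  point at \<open>x\<close>, with multiplier \<open>\<mu> = max F x\<close>; its multiplier \<open>\<nu> $ i0\<close> vanishes together with the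
  coordinate, against strict complementarity.\<close>
lemma strict_complementarity_active_kernel:
  assumes SC: "strict_complementarity F G" and max: "simplex_maximizer (F x) y"
    and grad_y: "gradx_f G x y = 0" and grad_v: "gradx_f G x v = 0" and sum_v: "(\<Sum>i\<in>UNIV. v $ i) = 0"
    and active_v: "\<And>i. v $ i \<noteq> 0 \<Longrightarrow> almost_argmax 0 (F x) i"
  shows "v = 0"
proof (rule ccontr)
  assume "v \<noteq> 0"
  have y: "y \<in> prob_simplex" using max by (simp add: simplex_maximizer_def)
  obtain s i0 where vi0: "v $ i0 < 0"
    and y2: "y + s *\<^sub>R v \<in> prob_simplex" and y2i0: "(y + s *\<^sub>R v) $ i0 = 0"
    using prob_simplex_ray_exit[OF y sum_v \<open>v \<noteq> 0\<close>] by blast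
  define \<mu> where "\<mu> = F x $ i0"
  define \<nu> where "\<nu> = (\<chi> i. \<mu> - F x $ i)"
  have active: "\<nu> $ i = 0" if "(y + s *\<^sub>R v) $ i \<noteq> 0" for i
  proof -
    have "y $ i \<noteq> 0 \<or> v $ i \<noteq> 0" using that by auto
    then have "almost_argmax 0 (F x) i"
      using simplex_maximizer_support[OF max] active_v prob_simplex_nonneg[OF y, of i]
      by (auto simp: less_le)
    then show ?thesis using active_v[of i0] vi0 by (auto simp: \<nu>_def \<mu>_def almost_argmax_def intro: antisym)
  qed
  have "KKT F G x (y + s *\<^sub>R v) \<mu> \<nu>"
    unfolding KKT_def
  proof (intro conjI allI)
    have "gradx_f G x (y + s *\<^sub>R v) = 0"
      using grad_y grad_v by (simp add: linear_add[OF linear_gradx_f] linear_scale[OF linear_gradx_f])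
    then show "(\<Sum>i\<in>UNIV. (y + s *\<^sub>R v) $ i *\<^sub>R G i x) = 0" by (simp add: gradx_f_def)
    show "(\<Sum>i\<in>UNIV. (y + s *\<^sub>R v) $ i) = 1" "\<And>i. 0 \<le> (y + s *\<^sub>R v) $ i"
      using y2 by (simp_all add: prob_simplex_def)
    show "\<mu> - \<nu> $ i = F x $ i" "0 \<le> \<nu> $ i" for i
      using active_v[of i0] vi0 by (auto simp: \<nu>_def \<mu>_def almost_argmax_def)
    show "\<nu> $ i * (y + s *\<^sub>R v) $ i = 0" for i
      using active[of i] by (cases "(y + s *\<^sub>R v) $ i = 0") auto
  qed
  then have "0 < \<nu> $ i0" using SC y2i0 unfolding strict_complementarity_def by blast
  moreover have "\<nu> $ i0 = 0" by (simp add: \<nu>_def \<mu>_def)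
  ultimately show False by simp
qed

lemma le_add_sqrt_of_square_le:
  fixes a b c e :: real
  assumes a: "0 < a" and "0 \<le> b" "0 \<le> c" and sq: "a * e\<^sup>2 \<le> b + c * e"
  shows "e \<le> c / a + sqrt (b / a)"
proof (rule ccontr)
  assume "\<not> ?thesis"
  then have gt: "c / a + sqrt (b / a) < e" by simp
  have "0 \<le> c / a" "0 \<le> sqrt (b / a)" using assms by auto
  then have e: "0 < e" using gt by linarith
  have "sqrt (b / a) * sqrt (b / a) \<le> e * sqrt (b / a)"
    using gt \<open>0 \<le> c / a\<close> \<open>0 \<le> sqrt (b / a)\<close> by (intro mult_right_mono) auto
  moreover have "e * (c / a + sqrt (b / a)) < e * e" using gt e by simp
  ultimately have "b / a + c / a * e < e\<^sup>2" using assms by (simp add: power2_eq_square algebra_simps)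
  then have "b + c * e < a * e\<^sup>2" using a by (simp add: field_simps)
  with sq show False by simp
qed

lemma le_of_mult_square_le:
  fixes a b t :: real
  assumes "a * t\<^sup>2 \<le> b * t" "0 \<le> t" "0 \<le> b" shows "a * t \<le> b"
  using assms by (cases "t = 0") (auto simp: power2_eq_square mult.assoc[symmetric])

lemma the_minimizer_eqI:
  fixes \<phi> :: "'a::real_normed_vector \<Rightarrow> real"
  assumes "0 < c" and growth: "\<And>u. \<phi> x + c * (norm (u - x))\<^sup>2 \<le> \<phi> u"
  shows "(THE x. \<forall>x'. \<phi> x \<le> \<phi> x') = x"
proof (rule the_equality)
  show "\<forall>x'. \<phi> x \<le> \<phi> x'"
    using growth \<open>0 < c\<close> by (smt (verit) mult_nonneg_nonneg zero_le_power2)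
next
  fix x'' assume "\<forall>x'. \<phi> x'' \<le> \<phi> x'"
  then have "c * (norm (x'' - x))\<^sup>2 \<le> 0" using growth[of x''] by (smt (verit))
  then show "x'' = x" using \<open>0 < c\<close> by (simp add: mult_le_0_iff)
qed

section \<open>The proximal primal problem\<close>

locale smoothed_minimax =
  fixes F :: "real^'n \<Rightarrow> real^'m" and G :: "'m \<Rightarrow> real^'n \<Rightarrow> real^'n" and L p :: real
  assumes has_derivative_F: "\<And>i x. ((\<lambda>u. F u $ i) has_derivative (\<lambda>h. G i x \<bullet> h)) (at x)"
    and assumptionA: "assumptionA F G L" and L_less_p: "L < p"
begin

lemma L_pos: "0 < L"
  using assumptionA by (simp add: assumptionA_def)

lemma p_pos: "0 < p"
  using L_pos L_less_p by simp

lemma gradx_f_lipschitz_x: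
  assumes "y \<in> prob_simplex" shows "norm (gradx_f G x y - gradx_f G x' y) \<le> L * norm (x - x')"
proof -
  have "norm ((x, y) - (x', y)) = norm (x - x')" by (simp add: norm_Pair)
  then show ?thesis using assumptionA assms unfolding assumptionA_def by metis
qed

lemma gradx_f_lipschitz_y:
  assumes "y \<in> prob_simplex" "y' \<in> prob_simplex"
  shows "norm (gradx_f G x y - gradx_f G x y') \<le> L * norm (y - y')"
proof -
  have "norm ((x, y) - (x, y')) = norm (y - y')" by (simp add: norm_Pair)
  then show ?thesis using assumptionA assms unfolding assumptionA_def by metis
qed

lemma F_lipschitz: "norm (F x - F x') \<le> L * norm (x - x')"
proof -
  have "norm ((x, axis undefined 1) - (x', axis undefined 1)) = norm (x - x')" by (simp add: norm_Pair)
  then show ?thesis using assumptionA axis_in_prob_simplex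
    unfolding assumptionA_def grady_f_def by metis
qed

lemma G_lipschitz: "norm (G i x - G i x') \<le> L * norm (x - x')"
proof -
  have "gradx_f G u (axis i 1) = G i u" for u
    by (simp add: gradx_f_def axis_def if_distrib[of "\<lambda>t. t *\<^sub>R _"] cong: if_cong)
  then show ?thesis using gradx_f_lipschitz_x[OF axis_in_prob_simplex] by metis
qed

lemma continuous_on_F: "continuous_on S F"
  by (rule lipschitz_on_continuous_on[where L=L], rule lipschitz_onI)
    (use F_lipschitz L_pos in \<open>auto simp: dist_norm\<close>)

lemma isCont_G: "isCont (G i) x"
proof -
  have "continuous_on UNIV (G i)"
    by (rule lipschitz_on_continuous_on[where L=L], rule lipschitz_onI)
      (use G_lipschitz L_pos in \<open>auto simp: dist_norm\<close>)
  then show ?thesis by (simp add: continuous_on_eq_continuous_at)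
qed

lemma G_bounded: "\<exists>C\<ge>0. \<forall>i x. norm x \<le> B \<longrightarrow> norm (G i x) \<le> C"
proof (intro exI[of _ "(\<Sum>i\<in>UNIV. norm (G i 0)) + L * \<bar>B\<bar>"] conjI allI impI)
  show "0 \<le> (\<Sum>i\<in>UNIV. norm (G i 0)) + L * \<bar>B\<bar>" using L_pos by (simp add: sum_nonneg)
  fix i x assume x: "norm (x::real^'n) \<le> B"
  have "norm (G i x) \<le> norm (G i 0) + L * norm x"
    using G_lipschitz[of i x 0] norm_triangle_ineq2[of "G i x" "G i 0"] by simp
  also have "\<dots> \<le> (\<Sum>i\<in>UNIV. norm (G i 0)) + L * \<bar>B\<bar>"
    using x L_pos by (intro add_mono member_le_sum mult_left_mono) auto
  finally show "norm (G i x) \<le> (\<Sum>i\<in>UNIV. norm (G i 0)) + L * \<bar>B\<bar>" .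
qed

lemma Kfun_has_derivative: "((\<lambda>x. Kfun F p x z y) has_derivative (\<lambda>h. gradx_K G p x z y \<bullet> h)) (at x)"
proof -
  have "(\<lambda>x. Kfun F p x z y) = (\<lambda>x. (\<Sum>i\<in>UNIV. F x $ i * y $ i) + p / 2 * ((x - z) \<bullet> (x - z)))"
    by (auto simp: Kfun_def fxy_def inner_vec_def power2_norm_eq_inner)
  moreover have "(\<lambda>h. gradx_K G p x z y \<bullet> h) =
      (\<lambda>h. (\<Sum>i\<in>UNIV. (G i x \<bullet> h) * y $ i) + p / 2 * (h \<bullet> (x - z) + (x - z) \<bullet> h))"
    by (auto simp: gradx_K_def gradx_f_def inner_add_left inner_sum_left inner_sum_right inner_commute algebra_simps)
  moreover have "((\<lambda>x. (\<Sum>i\<in>UNIV. F x $ i * y $ i) + p / 2 * ((x - z) \<bullet> (x - z))) has_derivative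
      (\<lambda>h. (\<Sum>i\<in>UNIV. (G i x \<bullet> h) * y $ i) + p / 2 * (h \<bullet> (x - z) + (x - z) \<bullet> h))) (at x)"
    by (intro has_derivative_add has_derivative_mult_right has_derivative_sum
        has_derivative_mult_left has_derivative_F) (auto intro!: derivative_eq_intros)
  ultimately show ?thesis by simp
qed

lemma gradx_K_strongly_monotone:
  assumes y: "y \<in> prob_simplex"
  shows "(p - L) * (norm (x - u))\<^sup>2 \<le> (gradx_K G p x z y - gradx_K G p u z y) \<bullet> (x - u)"
proof -
  have "\<bar>(gradx_f G x y - gradx_f G u y) \<bullet> (x - u)\<bar> \<le> norm (gradx_f G x y - gradx_f G u y) * norm (x - u)"
    by (rule Cauchy_Schwarz_ineq2)
  also have "\<dots> \<le> L * norm (x - u) * norm (x - u)"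
    by (intro mult_right_mono gradx_f_lipschitz_x y) auto
  finally have "- (L * (norm (x - u))\<^sup>2) \<le> (gradx_f G x y - gradx_f G u y) \<bullet> (x - u)"
    by (simp add: power2_eq_square)
  moreover have "(gradx_K G p x z y - gradx_K G p u z y) \<bullet> (x - u) =
      (gradx_f G x y - gradx_f G u y) \<bullet> (x - u) + p * (norm (x - u))\<^sup>2"
    by (simp add: gradx_K_def inner_diff_left inner_add_left power2_norm_eq_inner algebra_simps)
  ultimately show ?thesis by (simp add: algebra_simps)
qed

text \<open>Integrate the strong monotonicity of the gradient along the segment from \<open>x\<close> to \<open>u\<close>.\<close>
lemma Kfun_strongly_convex:
  assumes y: "y \<in> prob_simplex"
  shows "Kfun F p x z y + gradx_K G p x z y \<bullet> (u - x) + (p - L) / 2 * (norm (u - x))\<^sup>2 \<le> Kfun F p u z y"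
proof -
  define d where "d = u - x"
  define g where "g w = gradx_K G p w z y" for w
  define \<psi> where "\<psi> t = Kfun F p (x + t *\<^sub>R d) z y - t * (g x \<bullet> d) - (p - L) / 2 * t\<^sup>2 * (norm d)\<^sup>2" for t
  have der: "(\<psi> has_real_derivative (g (x + t *\<^sub>R d) \<bullet> d - g x \<bullet> d - (p - L) * t * (norm d)\<^sup>2)) (at t)" for t
  proof -
    have "((\<lambda>t. Kfun F p (x + t *\<^sub>R d) z y) has_derivative (\<lambda>s. g (x + t *\<^sub>R d) \<bullet> (s *\<^sub>R d))) (at t)"
      unfolding g_def by (rule has_derivative_compose[OF _ Kfun_has_derivative]) (auto intro!: derivative_eq_intros)
    then have K: "((\<lambda>t. Kfun F p (x + t *\<^sub>R d) z y) has_real_derivative (g (x + t *\<^sub>R d) \<bullet> d)) (at t)"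
      by (rule has_derivative_imp_has_field_derivative) simp
    show ?thesis unfolding \<psi>_def
      by (rule derivative_eq_intros K refl)+ (simp add: field_simps)
  qed
  have nonneg: "0 \<le> g (x + t *\<^sub>R d) \<bullet> d - g x \<bullet> d - (p - L) * t * (norm d)\<^sup>2" if "0 < t" for t
  proof -
    have "(p - L) * (norm ((x + t *\<^sub>R d) - x))\<^sup>2 \<le> (g (x + t *\<^sub>R d) - g x) \<bullet> ((x + t *\<^sub>R d) - x)"
      unfolding g_def by (rule gradx_K_strongly_monotone[OF y])
    then have "t * ((p - L) * t * (norm d)\<^sup>2) \<le> t * ((g (x + t *\<^sub>R d) - g x) \<bullet> d)"
      using that by (simp add: power2_eq_square algebra_simps)
    then show ?thesis using that by (simp add: inner_diff_left)
  qed
  have "\<psi> 0 \<le> \<psi> 1"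
  proof (rule DERIV_nonneg_imp_increasing_open[of 0 1])
    show "continuous_on {0..1} \<psi>"
      using der by (meson DERIV_continuous continuous_at_imp_continuous_on)
  next
    fix t :: real assume "0 < t" "t < 1"
    then show "\<exists>D. (\<psi> has_real_derivative D) (at t) \<and> 0 \<le> D" using der nonneg by blast
  qed simp
  then show ?thesis by (simp add: \<psi>_def d_def g_def algebra_simps)
qed

lemma gradx_K_zero_exists:
  assumes y: "y \<in> prob_simplex" shows "\<exists>x. gradx_K G p x z y = 0"
proof -
  define T where "T x = z - (1 / p) *\<^sub>R gradx_f G x y" for x
  have "\<exists>!x. T x = x"
  proof (rule banach_fix_type[of "L / p"])
    show "0 \<le> L / p" "L / p < 1" using L_pos L_less_p by auto
    show "\<forall>x u. dist (T x) (T u) \<le> L / p * dist x u"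
    proof (intro allI)
      fix x u
      have "dist (T x) (T u) = (1 / p) * norm (gradx_f G x y - gradx_f G u y)"
        unfolding T_def dist_norm using p_pos
        by (simp add: scaleR_diff_right[symmetric] norm_minus_commute)
      also have "\<dots> \<le> (1 / p) * (L * norm (x - u))"
        using gradx_f_lipschitz_x[OF y] p_pos by (intro mult_left_mono) auto
      finally show "dist (T x) (T u) \<le> L / p * dist x u" by (simp add: dist_norm)
    qed
  qed
  then obtain x where "T x = x" by blast
  then have "p *\<^sub>R (T x - z) = p *\<^sub>R (x - z)" by simp
  then have "gradx_K G p x z y = 0"
    using p_pos unfolding T_def gradx_K_def by (simp add: algebra_simps)
  then show ?thesis by blast
qed

lemma xmin_eqI:
  assumes y: "y \<in> prob_simplex" and "gradx_K G p x z y = 0"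
  shows "xmin F p y z = x"
  unfolding xmin_def
  by (rule the_minimizer_eqI[of "(p - L) / 2"])
    (use L_less_p Kfun_strongly_convex[OF y, of x z] assms(2) in auto)

lemma gradx_K_xmin: "y \<in> prob_simplex \<Longrightarrow> gradx_K G p (xmin F p y z) z y = 0"
  using gradx_K_zero_exists xmin_eqI by metis

lemma gradx_f_xmin: "y \<in> prob_simplex \<Longrightarrow> gradx_f G (xmin F p y z) y = - p *\<^sub>R (xmin F p y z - z)"
  using gradx_K_xmin[of y z] by (simp add: gradx_K_def eq_neg_iff_add_eq_0)

lemma Kfun_xmin_growth:
  "y \<in> prob_simplex \<Longrightarrow>
    Kfun F p (xmin F p y z) z y + (p - L) / 2 * (norm (u - xmin F p y z))\<^sup>2 \<le> Kfun F p u z y"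
  using Kfun_strongly_convex[of y "xmin F p y z" z u] gradx_K_xmin by simp

lemma xmin_lipschitz:
  assumes y: "y \<in> prob_simplex" and w: "w \<in> prob_simplex"
  shows "norm (xmin F p y z - xmin F p w z) \<le> L / (p - L) * norm (y - w)"
proof -
  define x u where "x = xmin F p y z" and "u = xmin F p w z"
  have "(p - L) * (norm (x - u))\<^sup>2 \<le> (gradx_K G p x z y - gradx_K G p u z y) \<bullet> (x - u)"
    by (rule gradx_K_strongly_monotone[OF y])
  also have "\<dots> = (gradx_K G p u z w - gradx_K G p u z y) \<bullet> (x - u)"
    using gradx_K_xmin[OF y] gradx_K_xmin[OF w] by (simp add: x_def u_def)
  also have "\<dots> = (gradx_f G u w - gradx_f G u y) \<bullet> (x - u)" by (simp add: gradx_K_def)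
  also have "\<dots> \<le> norm (gradx_f G u w - gradx_f G u y) * norm (x - u)"
    by (rule norm_cauchy_schwarz)
  also have "\<dots> \<le> L * norm (y - w) * norm (x - u)"
    using gradx_f_lipschitz_y[OF w y] by (intro mult_right_mono) (auto simp: norm_minus_commute)
  finally have "(p - L) * norm (x - u) \<le> L * norm (y - w)"
    by (rule le_of_mult_square_le) (use L_pos in auto)
  then show ?thesis using L_less_p by (simp add: x_def u_def field_simps)
qed

lemma continuous_on_xmin: "continuous_on prob_simplex (\<lambda>y. xmin F p y z)"
  by (rule lipschitz_on_continuous_on[where L="L / (p - L)"], rule lipschitz_onI)
    (use xmin_lipschitz L_pos L_less_p in \<open>auto simp: dist_norm\<close>)

lemma norm_sub_xmin_le_gradx_K:
  assumes y: "y \<in> prob_simplex"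
  shows "(p - L) * norm (v - xmin F p y z) \<le> norm (gradx_K G p v z y)"
proof -
  define x where "x = xmin F p y z"
  have "(p - L) * (norm (v - x))\<^sup>2 \<le> (gradx_K G p v z y - gradx_K G p x z y) \<bullet> (v - x)"
    by (rule gradx_K_strongly_monotone[OF y])
  also have "\<dots> = gradx_K G p v z y \<bullet> (v - x)" using gradx_K_xmin[OF y] by (simp add: x_def)
  also have "\<dots> \<le> norm (gradx_K G p v z y) * norm (v - x)" by (rule norm_cauchy_schwarz)
  finally show ?thesis unfolding x_def by (rule le_of_mult_square_le) auto
qed

lemma F_xmin_antimonotone:
  assumes y: "y \<in> prob_simplex" and w: "w \<in> prob_simplex"
  shows "(F (xmin F p y z) - F (xmin F p w z)) \<bullet> (y - w) \<le> - ((p - L) * (norm (xmin F p y z - xmin F p w z))\<^sup>2)"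
proof -
  define x u where "x = xmin F p y z" and "u = xmin F p w z"
  have "Kfun F p x z y + (p - L) / 2 * (norm (u - x))\<^sup>2 \<le> Kfun F p u z y"
    unfolding x_def by (rule Kfun_xmin_growth[OF y])
  moreover have "Kfun F p u z w + (p - L) / 2 * (norm (x - u))\<^sup>2 \<le> Kfun F p x z w"
    unfolding u_def by (rule Kfun_xmin_growth[OF w])
  ultimately have "Kfun F p x z y + Kfun F p u z w + (p - L) * (norm (x - u))\<^sup>2 \<le> Kfun F p u z y + Kfun F p x z w"
    by (simp add: norm_minus_commute)
  then show ?thesis unfolding x_def[symmetric] u_def[symmetric]
    by (simp add: Kfun_def fxy_def inner_diff_left inner_diff_right inner_commute algebra_simps)
qed

lemma bdd_above_Kfun_prob_simplex: "bdd_above ((\<lambda>w. Kfun F p x z w) ` prob_simplex)"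
proof (rule bdd_aboveI2)
  fix w :: "real^'m" assume w: "w \<in> prob_simplex"
  have "F x \<bullet> w \<le> norm (F x) * norm w" by (rule norm_cauchy_schwarz)
  also have "\<dots> \<le> norm (F x)" using norm_le_1_of_prob_simplex[OF w] by (simp add: mult_left_le)
  finally show "Kfun F p x z w \<le> norm (F x) + p / 2 * (norm (x - z))\<^sup>2"
    by (simp add: Kfun_def fxy_def)
qed

lemma saddle_point_exists:
  "\<exists>y. simplex_maximizer (F (xmin F p y z)) y \<and> xstar F p z = xmin F p y z"
proof -
  have "\<exists>y\<in>prob_simplex. projS (y + F (xmin F p y z)) = y"
  proof (rule brouwer[OF compact_prob_simplex convex_prob_simplex prob_simplex_nonempty])
    show "continuous_on prob_simplex (\<lambda>y. projS (y + F (xmin F p y z)))"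
      by (intro continuous_on_compose2[OF continuous_on_projS] continuous_intros
          continuous_on_compose2[OF continuous_on_F continuous_on_xmin]) auto
  qed (use projS_in_prob_simplex in auto)
  then obtain y where "projS (y + F (xmin F p y z)) = y" by blast
  then have max: "simplex_maximizer (F (xmin F p y z)) y" by (rule simplex_maximizer_projS_fixpoint)
  then have y: "y \<in> prob_simplex" by (simp add: simplex_maximizer_def)
  define x where "x = xmin F p y z"
  define S where "S u = (SUP w\<in>prob_simplex. Kfun F p u z w)" for u
  have "S x = Kfun F p x z y"
    unfolding S_def
  proof (rule cSup_eq_maximum)
    show "Kfun F p x z y \<in> (\<lambda>w. Kfun F p x z w) ` prob_simplex" using y by blast
  qed (use max in \<open>auto simp: simplex_maximizer_def Kfun_def fxy_def x_def\<close>)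
  moreover have "Kfun F p u z y \<le> S u" for u
    unfolding S_def by (rule cSUP_upper[OF y bdd_above_Kfun_prob_simplex])
  ultimately have "S x + (p - L) / 2 * (norm (u - x))\<^sup>2 \<le> S u" for u
    using Kfun_xmin_growth[OF y, of z u] unfolding x_def by (metis order.trans)
  then have "xstar F p z = x"
    unfolding xstar_def S_def[symmetric] by (rule the_minimizer_eqI[rotated]) (use L_less_p in simp)
  with max show ?thesis by (auto simp: x_def)
qed

section \<open>Uniform regularity from strict complementarity\<close>

lemma tendsto_gradx_f:
  assumes "(X \<longlongrightarrow> x) net" "(U \<longlongrightarrow> u) net"
  shows "((\<lambda>k. gradx_f G (X k) (U k)) \<longlongrightarrow> gradx_f G x u) net"
  unfolding gradx_f_def
  by (intro tendsto_intros isCont_tendsto_compose[OF isCont_G] tendsto_vec_nth assms)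

lemma strict_complementarity_limit_direction:
  assumes SC: "strict_complementarity F G"
    and X: "X \<longlonglongrightarrow> x" and Y: "Y \<longlonglongrightarrow> y" and V: "V \<longlonglongrightarrow> v" and e: "e \<longlonglongrightarrow> 0"
    and max: "\<And>k. simplex_maximizer (F (X k)) (Y k)"
    and grad_Y: "\<And>k. norm (gradx_f G (X k) (Y k)) \<le> e k"
    and active_V: "\<And>k i. V k $ i \<noteq> 0 \<Longrightarrow> almost_argmax (e k) (F (X k)) i"
    and grad_V: "\<And>k. norm (gradx_f G (X k) (V k)) + \<bar>\<Sum>i\<in>UNIV. V k $ i\<bar> \<le> e k"
  shows "v = 0"
proof (rule strict_complementarity_active_kernel[OF SC])
  have FX: "(\<lambda>k. F (X k)) \<longlonglongrightarrow> F x"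
    using X continuous_on_F[of UNIV] by (simp add: continuous_on_eq_continuous_at isCont_tendsto_compose)
  have "(F x, y) \<in> {(v, y). simplex_maximizer v y}"
    by (rule closed_sequentially[OF closed_simplex_maximizer _ tendsto_Pair[OF FX Y]]) (use max in auto)
  then show "simplex_maximizer (F x) y" by simp
  have "norm (gradx_f G x y) \<le> 0"
    by (rule tendsto_le[OF trivial_limit_sequentially e tendsto_norm[OF tendsto_gradx_f[OF X Y]]])
      (use grad_Y in auto)
  then show "gradx_f G x y = 0" by simp
  have "norm (gradx_f G x v) + \<bar>\<Sum>i\<in>UNIV. v $ i\<bar> \<le> 0"
    by (rule tendsto_le[OF trivial_limit_sequentially e tendsto_add[OF tendsto_norm[OF tendsto_gradx_f[OF X V]]
          tendsto_rabs[OF tendsto_sum[OF tendsto_vec_nth[OF V]]]]])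
      (use grad_V in auto)
  then show "gradx_f G x v = 0" "(\<Sum>i\<in>UNIV. v $ i) = 0"
    by (smt (verit) norm_ge_zero norm_le_zero_iff abs_ge_zero)+
  show "almost_argmax 0 (F x) i" if "v $ i \<noteq> 0" for i
    by (rule almost_argmax_limit[OF FX V e active_V that])
qed

lemma strict_complementarity_imp_active_regular_unit:
  assumes SC: "strict_complementarity F G"
  shows "\<exists>\<kappa>>0. \<forall>x y u. norm x \<le> B \<longrightarrow> simplex_maximizer (F x) y \<longrightarrow> norm (gradx_f G x y) \<le> \<kappa> \<longrightarrow>
    (\<forall>i. u $ i \<noteq> 0 \<longrightarrow> almost_argmax \<kappa> (F x) i) \<longrightarrow> norm u = 1 \<longrightarrow>
    \<kappa> \<le> norm (gradx_f G x u) + \<bar>\<Sum>i\<in>UNIV. u $ i\<bar>"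
proof (rule ccontr)
  define e :: "nat \<Rightarrow> real" where "e k = inverse (real (Suc k))" for k
  define bad where "bad \<kappa> q \<longleftrightarrow> (case q of (x, y, u) \<Rightarrow> norm x \<le> B \<and> simplex_maximizer (F x) y \<and>
    norm (gradx_f G x y) \<le> \<kappa> \<and> (\<forall>i. u $ i \<noteq> 0 \<longrightarrow> almost_argmax \<kappa> (F x) i) \<and> norm u = 1 \<and>
    norm (gradx_f G x u) + \<bar>\<Sum>i\<in>UNIV. u $ i\<bar> < \<kappa>)" for \<kappa> q
  assume "\<not> ?thesis"
  then have "\<exists>q. bad \<kappa> q" if "0 < \<kappa>" for \<kappa> using that unfolding bad_def by (auto simp: not_le)
  then have "\<forall>k. \<exists>q. bad (e k) q" by (simp add: e_def)
  then obtain W where W: "\<And>k. bad (e k) (W k)" by (metis choice)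
  have "W k \<in> cball 0 B \<times> prob_simplex \<times> sphere 0 1" for k
    using W[of k] by (auto simp: bad_def simplex_maximizer_def split: prod.splits)
  moreover have "compact (cball (0::real^'n) B \<times> prob_simplex \<times> sphere (0::real^'m) 1)"
    by (intro compact_Times compact_cball compact_prob_simplex compact_sphere)
  ultimately obtain l r where r: "strict_mono r" and lim: "(W \<circ> r) \<longlonglongrightarrow> l"
    using seq_compactE[OF compact_imp_seq_compact] by blast
  obtain x y v where l: "l = (x, y, v)" by (metis prod.collapse)
  define X Y V where "X = (\<lambda>k. fst (W (r k)))" and "Y = (\<lambda>k. fst (snd (W (r k))))"
    and "V = (\<lambda>k. snd (snd (W (r k))))"
  have bad_r: "bad (e (r k)) (X k, Y k, V k)" for k using W[of "r k"] by (simp add: X_def Y_def V_def)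
  have V: "V \<longlonglongrightarrow> v" using tendsto_snd[OF tendsto_snd[OF lim]] by (simp add: l V_def o_def)
  have "(\<lambda>k. norm (V k)) = (\<lambda>k. 1)" using bad_r by (simp add: bad_def)
  then have "norm v = 1" using tendsto_norm[OF V] by (simp add: LIMSEQ_const_iff)
  moreover have "v = 0"
  proof (rule strict_complementarity_limit_direction[OF SC _ _ V])
    show "X \<longlonglongrightarrow> x" using tendsto_fst[OF lim] by (simp add: l X_def o_def)
    show "Y \<longlonglongrightarrow> y" using tendsto_fst[OF tendsto_snd[OF lim]] by (simp add: l Y_def o_def)
    show "(\<lambda>k. e (r k)) \<longlonglongrightarrow> 0"
      using LIMSEQ_subseq_LIMSEQ[OF LIMSEQ_inverse_real_of_nat r] by (simp add: e_def o_def)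
  qed (use bad_r in \<open>simp_all add: bad_def less_imp_le\<close>)
  ultimately show False by simp
qed

text \<open>A quantitative linear independence of the gradients \<open>G i x\<close> of the \<open>\<kappa>\<close>-active
  components of \<open>F\<close> at \<open>x\<close>, jointly with the normal of the simplex.\<close>
definition active_regular :: "real \<Rightarrow> real^'n \<Rightarrow> bool" where
  "active_regular \<kappa> x \<longleftrightarrow> (\<forall>u. (\<forall>i. u $ i \<noteq> 0 \<longrightarrow> almost_argmax \<kappa> (F x) i) \<longrightarrow>
    \<kappa> * norm u \<le> norm (gradx_f G x u) + \<bar>\<Sum>i\<in>UNIV. u $ i\<bar>)"

lemma strict_complementarity_imp_active_regular:
  assumes SC: "strict_complementarity F G"
  shows "\<exists>\<kappa>>0. \<forall>x y. norm x \<le> B \<longrightarrow> simplex_maximizer (F x) y \<longrightarrow> norm (gradx_f G x y) \<le> \<kappa> \<longrightarrow>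
    active_regular \<kappa> x"
proof -
  obtain \<kappa> where \<kappa>: "0 < \<kappa>" and unit: "\<forall>x y u. norm x \<le> B \<longrightarrow> simplex_maximizer (F x) y \<longrightarrow>
    norm (gradx_f G x y) \<le> \<kappa> \<longrightarrow> (\<forall>i. u $ i \<noteq> 0 \<longrightarrow> almost_argmax \<kappa> (F x) i) \<longrightarrow> norm u = 1 \<longrightarrow>
    \<kappa> \<le> norm (gradx_f G x u) + \<bar>\<Sum>i\<in>UNIV. u $ i\<bar>"
    using strict_complementarity_imp_active_regular_unit[OF SC] by blast
  have "\<kappa> * norm u \<le> norm (gradx_f G x u) + \<bar>\<Sum>i\<in>UNIV. u $ i\<bar>"
    if "norm x \<le> B" "simplex_maximizer (F x) y" "norm (gradx_f G x y) \<le> \<kappa>"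
      and active: "\<forall>i. u $ i \<noteq> 0 \<longrightarrow> almost_argmax \<kappa> (F x) i" for x y u
  proof (cases "u = 0")
    case False
    define n where "n = norm u"
    have n: "0 < n" using False by (simp add: n_def)
    have "norm ((1 / n) *\<^sub>R u) = 1" using n by (simp add: n_def)
    moreover have "\<forall>i. ((1 / n) *\<^sub>R u) $ i \<noteq> 0 \<longrightarrow> almost_argmax \<kappa> (F x) i" using active by simp
    ultimately have "\<kappa> \<le> norm (gradx_f G x ((1 / n) *\<^sub>R u)) + \<bar>\<Sum>i\<in>UNIV. ((1 / n) *\<^sub>R u) $ i\<bar>"
      using unit that(1-3) by blast
    also have "\<dots> = (norm (gradx_f G x u) + \<bar>\<Sum>i\<in>UNIV. u $ i\<bar>) / n"
      using n by (simp add: linear_scale[OF linear_gradx_f] sum_divide_distrib[symmetric] add_divide_distrib)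
    finally show ?thesis using n by (simp add: n_def pos_le_divide_eq mult.commute)
  qed simp
  then show ?thesis using \<kappa> unfolding active_regular_def by blast
qed

section \<open>The error bound\<close>

definition yplus :: "real \<Rightarrow> real^'m \<Rightarrow> real^'n \<Rightarrow> real^'m" where
  "yplus \<alpha> y z = projS (y + \<alpha> *\<^sub>R F (xmin F p y z))"

lemma norm_gradx_f_xmin_diff:
  assumes y: "y \<in> prob_simplex" and w: "w \<in> prob_simplex"
  shows "norm (gradx_f G (xmin F p y z) w - gradx_f G (xmin F p y z) y) \<le> (L + p) * norm (xmin F p w z - xmin F p y z)"
proof -
  define x u where "x = xmin F p y z" and "u = xmin F p w z"
  have "gradx_f G x y = - p *\<^sub>R (x - z)" "gradx_f G u w = - p *\<^sub>R (u - z)"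
    using gradx_f_xmin[OF y] gradx_f_xmin[OF w] by (simp_all add: x_def u_def)
  then have "gradx_f G x w - gradx_f G x y = (gradx_f G x w - gradx_f G u w) - p *\<^sub>R (u - x)"
    by (simp add: algebra_simps)
  also have "norm \<dots> \<le> L * norm (x - u) + p * norm (u - x)"
    using norm_triangle_ineq4 gradx_f_lipschitz_x[OF w, of x u] p_pos
    by (smt (verit) norm_scaleR abs_of_pos)
  finally show ?thesis by (simp add: x_def u_def norm_minus_commute algebra_simps)
qed

text \<open>The ascent step \<open>yplus\<close> is tested against a dual solution \<open>y'\<close> through the projection
  inequality; strong concavity in \<open>y\<close> of the dual function yields the term in \<open>(p - L)\<close>, and the
  gap of \<open>F x'\<close> on its inactive coordinates yields the term in \<open>\<eta>\<close>.\<close>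
lemma dual_step_inequality:
  assumes \<alpha>: "0 < \<alpha>" and y: "y \<in> prob_simplex" and max': "simplex_maximizer (F (xmin F p y' z)) y'"
  defines "x \<equiv> xmin F p y z" and "x' \<equiv> xmin F p y' z" and "r \<equiv> norm (y - yplus \<alpha> y z)"
  shows "\<alpha> * (p - L) * (norm (x - x'))\<^sup>2 + \<alpha> * \<eta> * (\<Sum>i | \<not> almost_argmax \<eta> (F x') i. yplus \<alpha> y z $ i)
    \<le> r * norm (yplus \<alpha> y z - y') + \<alpha> * L * norm (x - x') * r"
proof -
  define e yp where "e = norm (x - x')" and "yp = yplus \<alpha> y z"
  define S where "S = (\<Sum>i | \<not> almost_argmax \<eta> (F x') i. yp $ i)"
  have y': "y' \<in> prob_simplex" using max' by (simp add: simplex_maximizer_def)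
  have proj: "(y + \<alpha> *\<^sub>R F x - yp) \<bullet> (y' - yp) \<le> 0"
    unfolding yp_def yplus_def x_def by (rule projS_inner_le_0[OF y'])
  have mono: "(F x - F x') \<bullet> (y - y') \<le> - ((p - L) * e\<^sup>2)"
    unfolding x_def x'_def e_def by (rule F_xmin_antimonotone[OF y y'])
  have gap: "F x' \<bullet> yp + \<eta> * S \<le> F x' \<bullet> y'"
    unfolding S_def x'_def yp_def yplus_def
    by (rule simplex_maximizer_gap[OF max' projS_in_prob_simplex])
  have "(yp - y) \<bullet> (y' - yp) \<le> r * norm (yp - y')"
    using norm_cauchy_schwarz[of "yp - y" "y' - yp"] by (simp add: r_def yp_def norm_minus_commute)
  moreover have "\<bar>(F x - F x') \<bullet> (y - yp)\<bar> \<le> L * e * r"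
  proof -
    have "\<bar>(F x - F x') \<bullet> (y - yp)\<bar> \<le> norm (F x - F x') * norm (y - yp)" by (rule Cauchy_Schwarz_ineq2)
    also have "\<dots> \<le> L * e * r" unfolding e_def r_def yp_def by (intro mult_right_mono F_lipschitz) auto
    finally show ?thesis .
  qed
  moreover have "\<alpha> * (F x \<bullet> (y' - yp)) \<le> (yp - y) \<bullet> (y' - yp)"
    using proj by (simp add: inner_add_left inner_diff_left algebra_simps)
  moreover have "F x \<bullet> (y' - yp) = - ((F x - F x') \<bullet> (y - y')) + (F x - F x') \<bullet> (y - yp) + (F x' \<bullet> y' - F x' \<bullet> yp)"
    by (simp add: inner_diff_left inner_diff_right algebra_simps)
  ultimately have "\<alpha> * ((p - L) * e\<^sup>2 - L * e * r + \<eta> * S) \<le> r * norm (yp - y')"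
    using mono gap \<alpha> by (smt (verit) mult_left_mono)
  then show ?thesis unfolding S_def e_def yp_def by (simp add: algebra_simps)
qed

text \<open>Splitting \<open>w - y'\<close> into its part on the \<open>\<kappa>\<close>-active coordinates of \<open>F x'\<close>, where the
  regularity bound applies, and its part on the inactive ones, where \<open>y'\<close> vanishes.\<close>
lemma norm_sub_dual_le:
  assumes max': "simplex_maximizer (F (xmin F p y' z)) y'" and w: "w \<in> prob_simplex"
    and \<kappa>: "0 < \<kappa>" and C: "\<And>i. norm (G i (xmin F p y' z)) \<le> C"
    and regular: "active_regular \<kappa> (xmin F p y' z)"
  defines "x' \<equiv> xmin F p y' z"
  shows "\<kappa> * norm (w - y') \<le> (L + p) * norm (xmin F p w z - x')
    + (C + 1 + \<kappa>) * (\<Sum>i | \<not> almost_argmax \<kappa> (F x') i. w $ i)"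
proof -
  define I where "I = {i. \<not> almost_argmax \<kappa> (F x') i}"
  define S where "S = (\<Sum>i\<in>I. w $ i)"
  define u where "u = (\<chi> i. if i \<in> I then 0 else (w - y') $ i)"
  define v where "v = (\<chi> i. if i \<in> I then w $ i else 0)"
  have y': "y' \<in> prob_simplex" using max' by (simp add: simplex_maximizer_def)
  have "y' $ i = 0" if "i \<in> I" for i
    using simplex_maximizer_support[OF max'[folded x'_def], of i] almost_argmax_mono[of 0 _ i \<kappa>]
      prob_simplex_nonneg[OF y', of i] that \<kappa> by (force simp: I_def)
  then have split: "w - y' = u + v" by (auto simp: vec_eq_iff u_def v_def)
  have sum_v: "(\<Sum>i\<in>UNIV. v $ i) = S"
    by (simp add: v_def S_def sum.If_cases)
  have v_nonneg: "0 \<le> v $ i" for i using prob_simplex_nonneg[OF w] by (simp add: v_def)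
  have "norm v \<le> S"
    using norm_le_l1_cart[of v] v_nonneg sum_v by simp
  have "(\<Sum>i\<in>UNIV. (w - y') $ i) = 0"
    using prob_simplex_sum[OF w] prob_simplex_sum[OF y'] by (simp add: sum_subtractf)
  moreover have "0 \<le> S" unfolding sum_v[symmetric] using v_nonneg by (simp add: sum_nonneg)
  ultimately have sum_u: "\<bar>\<Sum>i\<in>UNIV. u $ i\<bar> = S"
    using sum_v by (simp add: split sum.distrib)
  have grad_v: "norm (gradx_f G x' v) \<le> C * S"
    using norm_gradx_f_le_sum[of v G x' C, OF v_nonneg C[folded x'_def]] by (simp add: sum_v)
  have grad_wy: "norm (gradx_f G x' w - gradx_f G x' y') \<le> (L + p) * norm (xmin F p w z - x')"
    unfolding x'_def by (rule norm_gradx_f_xmin_diff[OF y' w])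
  have "gradx_f G x' u = (gradx_f G x' w - gradx_f G x' y') - gradx_f G x' v"
    using split linear_diff[OF linear_gradx_f] linear_add[OF linear_gradx_f] by (metis add_diff_cancel)
  then have "norm (gradx_f G x' u) \<le> (L + p) * norm (xmin F p w z - x') + C * S"
    using grad_wy grad_v norm_triangle_ineq4 by (smt (verit))
  moreover have "\<kappa> * norm u \<le> norm (gradx_f G x' u) + S"
  proof -
    have "\<forall>i. u $ i \<noteq> 0 \<longrightarrow> almost_argmax \<kappa> (F x') i" by (simp add: u_def I_def)
    then show ?thesis using regular[folded x'_def] sum_u unfolding active_regular_def by metis
  qed
  moreover have "\<kappa> * norm (w - y') \<le> \<kappa> * norm u + \<kappa> * S"
    using \<kappa> \<open>norm v \<le> S\<close> norm_triangle_ineq[of u v] split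
    by (smt (verit) mult_left_mono distrib_left)
  ultimately show ?thesis unfolding S_def I_def by (simp add: algebra_simps)
qed

lemma norm_xmin_sub_dual_rough:
  assumes \<alpha>: "0 < \<alpha>" and y: "y \<in> prob_simplex" and max': "simplex_maximizer (F (xmin F p y' z)) y'"
    and r: "norm (y - yplus \<alpha> y z) \<le> \<delta>"
  shows "norm (xmin F p y z - xmin F p y' z) \<le> L / (p - L) * \<delta> + sqrt (2 / (\<alpha> * (p - L)) * \<delta>)"
proof -
  define e r where "e = norm (xmin F p y z - xmin F p y' z)" and "r = norm (y - yplus \<alpha> y z)"
  have y': "y' \<in> prob_simplex" using max' by (simp add: simplex_maximizer_def)
  have "norm (yplus \<alpha> y z - y') \<le> 2"
    using norm_triangle_ineq4[of "yplus \<alpha> y z" y'] norm_le_1_of_prob_simplex[OF y']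
      norm_le_1_of_prob_simplex[OF projS_in_prob_simplex, of "y + \<alpha> *\<^sub>R F (xmin F p y z)"]
    by (simp add: yplus_def)
  then have "r * norm (yplus \<alpha> y z - y') \<le> r * 2" by (rule mult_left_mono) (simp add: r_def)
  then have "\<alpha> * (p - L) * e\<^sup>2 \<le> 2 * r + (\<alpha> * L * r) * e"
    using dual_step_inequality[OF \<alpha> y max', of 0] by (simp add: e_def r_def algebra_simps)
  then have "e \<le> \<alpha> * L * r / (\<alpha> * (p - L)) + sqrt (2 * r / (\<alpha> * (p - L)))"
    by (rule le_add_sqrt_of_square_le[rotated 3]) (use \<alpha> L_pos L_less_p in \<open>auto simp: r_def\<close>)
  also have "\<dots> \<le> \<alpha> * L * \<delta> / (\<alpha> * (p - L)) + sqrt (2 * \<delta> / (\<alpha> * (p - L)))"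
    using r \<alpha> L_pos L_less_p
    by (intro add_mono divide_right_mono real_sqrt_le_mono mult_left_mono) (auto simp: r_def)
  finally show ?thesis using \<alpha> by (simp add: e_def)
qed

lemma norm_xmin_sub_dual_quadratic:
  assumes \<alpha>: "0 < \<alpha>" and y: "y \<in> prob_simplex" and max': "simplex_maximizer (F (xmin F p y' z)) y'"
    and \<kappa>: "0 < \<kappa>" and C: "\<And>i. norm (G i (xmin F p y' z)) \<le> C"
    and regular: "active_regular \<kappa> (xmin F p y' z)"
    and small: "norm (y - yplus \<alpha> y z) * (C + 1 + \<kappa>) \<le> \<alpha> * \<kappa>\<^sup>2"
  defines "r \<equiv> norm (y - yplus \<alpha> y z)" and "e \<equiv> norm (xmin F p y z - xmin F p y' z)"
  shows "\<kappa> * \<alpha> * (p - L) * e\<^sup>2 \<le> (L + p) * (L / (p - L)) * r\<^sup>2 + ((L + p + \<kappa> * \<alpha> * L) * r) * e"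
proof -
  define x x' yp where "x = xmin F p y z" and "x' = xmin F p y' z" and "yp = yplus \<alpha> y z"
  define S where "S = (\<Sum>i | \<not> almost_argmax \<kappa> (F x') i. yp $ i)"
  define M where "M = L / (p - L)"
  have yp: "yp \<in> prob_simplex" by (simp add: yp_def yplus_def projS_in_prob_simplex)
  have S: "0 \<le> S" unfolding S_def using prob_simplex_nonneg[OF yp] by (simp add: sum_nonneg)
  have r: "0 \<le> r" by (simp add: r_def)
  have key: "\<alpha> * (p - L) * e\<^sup>2 + \<alpha> * \<kappa> * S \<le> r * norm (yp - y') + \<alpha> * L * e * r"
    using dual_step_inequality[OF \<alpha> y max', of \<kappa>] by (simp add: S_def e_def r_def x'_def yp_def)
  have "norm (xmin F p yp z - x) \<le> M * r"
    using xmin_lipschitz[OF yp y] by (simp add: M_def x_def yp_def r_def norm_minus_commute)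
  then have "norm (xmin F p yp z - x') \<le> M * r + e"
    using norm_triangle_ineq[of "xmin F p yp z - x" "x - x'"] by (simp add: e_def x_def x'_def)
  then have "(L + p) * norm (xmin F p yp z - x') \<le> (L + p) * (M * r + e)"
    using L_pos p_pos by (intro mult_left_mono) auto
  then have "\<kappa> * norm (yp - y') \<le> (L + p) * (M * r + e) + (C + 1 + \<kappa>) * S"
    using norm_sub_dual_le[OF max' yp \<kappa> C regular] by (simp add: S_def x'_def)
  then have "r * (\<kappa> * norm (yp - y')) \<le> r * ((L + p) * (M * r + e)) + r * (C + 1 + \<kappa>) * S"
    using mult_left_mono[OF _ r] by (fastforce simp: algebra_simps)
  moreover have "r * (C + 1 + \<kappa>) * S \<le> \<alpha> * \<kappa>\<^sup>2 * S"
    using mult_right_mono[OF small S] by (simp add: r_def)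
  moreover have "\<kappa> * (\<alpha> * (p - L) * e\<^sup>2 + \<alpha> * \<kappa> * S) \<le> \<kappa> * (r * norm (yp - y') + \<alpha> * L * e * r)"
    using mult_left_mono[OF key] \<kappa> by simp
  ultimately show ?thesis by (simp add: M_def power2_eq_square algebra_simps)
qed

definition error_bound_factor :: "real \<Rightarrow> real \<Rightarrow> real" where
  "error_bound_factor \<alpha> \<kappa> = L / (p - L) + (L + p + \<kappa> * \<alpha> * L) / (\<kappa> * \<alpha> * (p - L))
    + sqrt ((L + p) * L / (\<kappa> * \<alpha> * (p - L)\<^sup>2))"

lemma error_bound_factor_pos: "0 < \<alpha> \<Longrightarrow> 0 < \<kappa> \<Longrightarrow> 0 < error_bound_factor \<alpha> \<kappa>"
  using L_pos L_less_p by (simp add: error_bound_factor_def add_pos_nonneg)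

lemma norm_xmin_yplus_sub_dual:
  assumes \<alpha>: "0 < \<alpha>" and y: "y \<in> prob_simplex" and max': "simplex_maximizer (F (xmin F p y' z)) y'"
    and \<kappa>: "0 < \<kappa>" and C: "\<And>i. norm (G i (xmin F p y' z)) \<le> C"
    and regular: "active_regular \<kappa> (xmin F p y' z)"
    and small: "norm (y - yplus \<alpha> y z) * (C + 1 + \<kappa>) \<le> \<alpha> * \<kappa>\<^sup>2"
  defines "r \<equiv> norm (y - yplus \<alpha> y z)"
  shows "norm (xmin F p (yplus \<alpha> y z) z - xmin F p y' z) \<le> error_bound_factor \<alpha> \<kappa> * r"
proof -
  define x x' where "x = xmin F p y z" and "x' = xmin F p y' z"
  have r: "0 \<le> r" by (simp add: r_def)
  have "norm (x - x') \<le> (L + p + \<kappa> * \<alpha> * L) * r / (\<kappa> * \<alpha> * (p - L))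
      + sqrt ((L + p) * (L / (p - L)) * r\<^sup>2 / (\<kappa> * \<alpha> * (p - L)))"
    using norm_xmin_sub_dual_quadratic[OF \<alpha> y max' \<kappa> C regular small] unfolding x_def x'_def r_def
    by (rule le_add_sqrt_of_square_le[rotated 3]) (use \<alpha> \<kappa> L_pos L_less_p in auto)
  also have "(L + p) * (L / (p - L)) * r\<^sup>2 / (\<kappa> * \<alpha> * (p - L)) = (L + p) * L / (\<kappa> * \<alpha> * (p - L)\<^sup>2) * r\<^sup>2"
    by (simp add: power2_eq_square)
  also have "sqrt ((L + p) * L / (\<kappa> * \<alpha> * (p - L)\<^sup>2) * r\<^sup>2) = sqrt ((L + p) * L / (\<kappa> * \<alpha> * (p - L)\<^sup>2)) * r"
    using r by (subst real_sqrt_mult) simp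
  finally have "norm (x - x') \<le> ((L + p + \<kappa> * \<alpha> * L) / (\<kappa> * \<alpha> * (p - L))
      + sqrt ((L + p) * L / (\<kappa> * \<alpha> * (p - L)\<^sup>2))) * r"
    by (simp add: algebra_simps)
  moreover have "norm (xmin F p (yplus \<alpha> y z) z - x) \<le> L / (p - L) * r"
    using xmin_lipschitz[OF projS_in_prob_simplex y] by (simp add: yplus_def x_def r_def norm_minus_commute)
  ultimately show ?thesis
    using norm_triangle_ineq[of "xmin F p (yplus \<alpha> y z) z - x" "x - x'"]
    by (simp add: x'_def error_bound_factor_def algebra_simps)
qed

lemma norm_xmin_yplus_sub_xstar:
  assumes \<alpha>: "0 < \<alpha>" and \<kappa>: "0 < \<kappa>" and "0 \<le> C"
    and regular_near: "\<And>x y. norm x \<le> R + 1 \<Longrightarrow> simplex_maximizer (F x) y \<Longrightarrow>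
      norm (gradx_f G x y) \<le> \<kappa> \<Longrightarrow> active_regular \<kappa> x"
    and C: "\<And>i x. norm x \<le> R + 1 \<Longrightarrow> norm (G i x) \<le> C"
    and \<delta>_near: "\<delta> + (L / (p - L) * \<delta> + sqrt (2 / (\<alpha> * (p - L)) * \<delta>)) \<le> min 1 (\<kappa> / p)"
    and \<delta>_small: "(C + 1 + \<kappa>) * \<delta> \<le> \<alpha> * \<kappa>\<^sup>2"
    and z: "norm z \<le> R" and y: "y \<in> prob_simplex" and near_z: "norm (xmin F p y z - z) \<le> \<delta>"
    and r: "norm (y - yplus \<alpha> y z) \<le> \<delta>"
  shows "norm (xmin F p (yplus \<alpha> y z) z - xstar F p z) \<le> error_bound_factor \<alpha> \<kappa> * norm (y - yplus \<alpha> y z)"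
proof -
  obtain y' where max': "simplex_maximizer (F (xmin F p y' z)) y'" and xstar: "xstar F p z = xmin F p y' z"
    using saddle_point_exists by blast
  define x' where "x' = xmin F p y' z"
  have "norm (x' - xmin F p y z) \<le> L / (p - L) * \<delta> + sqrt (2 / (\<alpha> * (p - L)) * \<delta>)"
    using norm_xmin_sub_dual_rough[OF \<alpha> y max' r] by (simp only: x'_def norm_minus_commute)
  then have "norm (x' - z) \<le> L / (p - L) * \<delta> + sqrt (2 / (\<alpha> * (p - L)) * \<delta>) + \<delta>"
    by (rule norm_diff_triangle_le[OF _ near_z])
  then have "norm (x' - z) \<le> min 1 (\<kappa> / p)" using \<delta>_near by linarith
  then have x'_z: "norm (x' - z) \<le> 1" "p * norm (x' - z) \<le> \<kappa>"
    using p_pos by (auto simp: pos_le_divide_eq mult.commute)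
  have "norm x' \<le> R + 1" using z x'_z norm_triangle_ineq[of "x' - z" z] by simp
  moreover have "norm (gradx_f G x' y') \<le> \<kappa>"
    using max' p_pos x'_z(2) by (simp add: x'_def gradx_f_xmin simplex_maximizer_def)
  ultimately have "active_regular \<kappa> x'" and "norm (G i x') \<le> C" for i
    using regular_near C max' by (auto simp: x'_def)
  moreover have "norm (y - yplus \<alpha> y z) * (C + 1 + \<kappa>) \<le> \<alpha> * \<kappa>\<^sup>2"
  proof -
    have "norm (y - yplus \<alpha> y z) * (C + 1 + \<kappa>) \<le> \<delta> * (C + 1 + \<kappa>)"
      using r \<open>0 \<le> C\<close> \<kappa> by (intro mult_right_mono) auto
    then show ?thesis using \<delta>_small by (simp add: mult.commute)
  qed
  ultimately show ?thesis using norm_xmin_yplus_sub_dual[OF \<alpha> y max' \<kappa>] xstar unfolding x'_def by metis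
qed

lemma xmin_yplus_error_bound:
  assumes SC: "strict_complementarity F G" and \<alpha>: "0 < \<alpha>"
  shows "\<exists>\<delta>>0. \<exists>\<sigma>>0. \<forall>z y. norm z \<le> R \<longrightarrow> y \<in> prob_simplex \<longrightarrow> norm (xmin F p y z - z) \<le> \<delta> \<longrightarrow>
    norm (y - yplus \<alpha> y z) \<le> \<delta> \<longrightarrow>
    norm (xmin F p (yplus \<alpha> y z) z - xstar F p z) \<le> \<sigma> * norm (y - yplus \<alpha> y z)"
proof -
  obtain \<kappa> where \<kappa>: "0 < \<kappa>" and regular_near: "\<forall>x y. norm x \<le> R + 1 \<longrightarrow> simplex_maximizer (F x) y \<longrightarrow>
      norm (gradx_f G x y) \<le> \<kappa> \<longrightarrow> active_regular \<kappa> x"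
    using strict_complementarity_imp_active_regular[OF SC] by blast
  obtain C where "0 \<le> C" and C: "\<forall>i x. norm x \<le> R + 1 \<longrightarrow> norm (G i x) \<le> C" using G_bounded by blast
  have "((\<lambda>\<delta>. \<delta> + (L / (p - L) * \<delta> + sqrt (2 / (\<alpha> * (p - L)) * \<delta>))) \<longlongrightarrow> 0) (at_right 0)"
    "((\<lambda>\<delta>. (C + 1 + \<kappa>) * \<delta>) \<longlongrightarrow> 0) (at_right 0)"
    using \<alpha> L_less_p by (auto intro!: tendsto_eq_intros)
  then have "\<forall>\<^sub>F \<delta> in at_right 0. 0 < \<delta> \<and> (C + 1 + \<kappa>) * \<delta> < \<alpha> * \<kappa>\<^sup>2 \<and>
      \<delta> + (L / (p - L) * \<delta> + sqrt (2 / (\<alpha> * (p - L)) * \<delta>)) < min 1 (\<kappa> / p)"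
    using \<alpha> \<kappa> p_pos by (intro eventually_conj eventually_at_right_less order_tendstoD(2)) auto
  then obtain \<delta> where \<delta>: "0 < \<delta>" "(C + 1 + \<kappa>) * \<delta> < \<alpha> * \<kappa>\<^sup>2"
      "\<delta> + (L / (p - L) * \<delta> + sqrt (2 / (\<alpha> * (p - L)) * \<delta>)) < min 1 (\<kappa> / p)"
    using eventually_happens'[OF trivial_limit_at_right_real] by blast
  have "norm (xmin F p (yplus \<alpha> y z) z - xstar F p z) \<le> error_bound_factor \<alpha> \<kappa> * norm (y - yplus \<alpha> y z)"
    if "norm z \<le> R" "y \<in> prob_simplex" "norm (xmin F p y z - z) \<le> \<delta>" "norm (y - yplus \<alpha> y z) \<le> \<delta>" for z y
    by (rule norm_xmin_yplus_sub_xstar[OF \<alpha> \<kappa> \<open>0 \<le> C\<close> _ _ _ _ that]) (use regular_near C \<delta>(2,3) in auto)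
  then show ?thesis using \<delta>(1) error_bound_factor_pos[OF \<alpha> \<kappa>] by blast
qed

lemma norm_xmin_sub_center_le_step:
  assumes y: "y \<in> prob_simplex" and c: "0 < c" and step: "v' = v - c *\<^sub>R gradx_K G p v z y"
  shows "norm (xmin F p y z - z) \<le> (1 + 1 / (c * (p - L))) * norm (v - v') + norm (v' - z)"
proof -
  have "(p - L) * norm (v - xmin F p y z) \<le> norm (gradx_K G p v z y)"
    by (rule norm_sub_xmin_le_gradx_K[OF y])
  also have "\<dots> = norm (v - v') / c" using step c by simp
  finally have "norm (v - xmin F p y z) \<le> norm (v - v') / (c * (p - L))"
    using c L_less_p by (simp add: field_simps)
  then show ?thesis
    using norm_triangle_ineq[of "xmin F p y z - v" "v - v'"] norm_triangle_ineq[of "xmin F p y z - v'" "v' - z"]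
    by (simp add: norm_minus_commute algebra_simps)
qed

end

theorem lemma1:
  fixes F :: "real^'n \<Rightarrow> real^'m"
    and G :: "'m \<Rightarrow> real^'n \<Rightarrow> real^'n"
    and L c \<alpha> p \<beta> R :: real
    and xs zs :: "nat \<Rightarrow> real^'n"
    and ys :: "nat \<Rightarrow> real^'m"
  assumes smooth: "\<And>i x. ((\<lambda>u. F u $ i) has_derivative (\<lambda>h. G i x \<bullet> h)) (at x)"
    and contgrad: "\<And>i. continuous_on UNIV (G i)"
    and A: "assumptionA F G L"
    and SC: "strict_complementarity F G"
    and c: "c > 0" and \<alpha>: "\<alpha> > 0" and p: "p > L" and \<beta>: "0 < \<beta>" "\<beta> \<le> 1"
    and y0: "ys 0 \<in> prob_simplex"
    and xstep: "\<And>t. xs (Suc t) = xs t - c *\<^sub>R gradx_K G p (xs t) (zs t) (ys t)"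
    and ystep: "\<And>t. ys (Suc t) = projS (ys t + \<alpha> *\<^sub>R grady_K F p (xs (Suc t)) (zs t) (ys t))"
    and zstep: "\<And>t. zs (Suc t) = zs t + \<beta> *\<^sub>R (xs (Suc t) - zs t)"
    and R: "R > 0" and zbound: "\<And>t. norm (zs t) \<le> R"
  shows "\<exists>\<delta> \<sigma>5. \<delta> > 0 \<and> \<sigma>5 > 0 \<and>
    (\<forall>t. let yplus = projS (ys t + \<alpha> *\<^sub>R grady_K F p (xmin F p (ys t) (zs t)) (zs t) (ys t)) in
       max (norm (xs t - xs (Suc t))) (max (norm (ys t - yplus)) (norm (xs (Suc t) - zs t))) \<le> \<delta>
       \<longrightarrow> norm (xmin F p yplus (zs t) - xstar F p (zs t)) \<le> \<sigma>5 * norm (ys t - yplus))"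
proof -
  \<comment> \<open>Continuity of \<open>G\<close> already follows from Assumption A, and only the \<open>x\<close>- and \<open>y\<close>-updates
    of the iteration matter.\<close>
  interpret smoothed_minimax F G L p
    by unfold_locales (use smooth A p in auto)
  obtain \<epsilon> \<sigma> where \<epsilon>: "0 < \<epsilon>" and \<sigma>: "0 < \<sigma>" and bound: "\<forall>z y. norm z \<le> R \<longrightarrow> y \<in> prob_simplex \<longrightarrow>
      norm (xmin F p y z - z) \<le> \<epsilon> \<longrightarrow> norm (y - yplus \<alpha> y z) \<le> \<epsilon> \<longrightarrow>
      norm (xmin F p (yplus \<alpha> y z) z - xstar F p z) \<le> \<sigma> * norm (y - yplus \<alpha> y z)"
    using xmin_yplus_error_bound[OF SC \<alpha>] by blast
  have ys: "ys t \<in> prob_simplex" for t by (cases t) (use y0 ystep projS_in_prob_simplex in auto)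
  have yplus: "projS (ys t + \<alpha> *\<^sub>R grady_K F p (xmin F p (ys t) (zs t)) (zs t) (ys t)) = yplus \<alpha> (ys t) (zs t)" for t
    by (simp add: yplus_def grady_K_def grady_f_def)
  define k where "k = 2 + 1 / (c * (p - L))"
  have k: "1 \<le> k" using c p by (simp add: k_def)
  have "\<epsilon> / k \<le> \<epsilon>" using \<epsilon> k by (simp add: divide_le_eq)
  have "norm (xmin F p (yplus \<alpha> (ys t) (zs t)) (zs t) - xstar F p (zs t)) \<le> \<sigma> * norm (ys t - yplus \<alpha> (ys t) (zs t))"
    if step: "norm (xs t - xs (Suc t)) \<le> \<epsilon> / k" and dual: "norm (ys t - yplus \<alpha> (ys t) (zs t)) \<le> \<epsilon> / k"
      and prox: "norm (xs (Suc t) - zs t) \<le> \<epsilon> / k" for t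
  proof -
    have "norm (xmin F p (ys t) (zs t) - zs t) \<le> (k - 1) * norm (xs t - xs (Suc t)) + norm (xs (Suc t) - zs t)"
      using norm_xmin_sub_center_le_step[OF ys c xstep] by (simp add: k_def)
    also have "\<dots> \<le> (k - 1) * (\<epsilon> / k) + \<epsilon> / k" using step prox k by (intro add_mono mult_left_mono) auto
    also have "\<dots> = \<epsilon>" using k by (simp add: field_simps)
    finally show ?thesis using bound zbound ys dual \<open>\<epsilon> / k \<le> \<epsilon>\<close> by force
  qed
  then show ?thesis using \<epsilon> \<sigma> k by (intro exI[of _ "\<epsilon> / k"] exI[of _ \<sigma>]) (simp add: yplus Let_def)
qed

end
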